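(* Let $\Omega\subset\mathbb{R}^N$ be a bounded domain with $C^1$ boundary and $v_0\in C(\overline\Omega)$. Define $v(x):=v_0(x)$ for $x\in\overline\Omega$ and $$v(x):=\frac{\int_{(0,1)}c_{N,s}\int_\Omega\frac{v_0(y)}{|x-y|^{N+2s}}dy\,d\mu(s)}{\int_{(0,1)}c_{N,s}\int_\Omega\frac{1}{|x-y|^{N+2s}}dy\,d\mu(s)}\quad\text{for }x\in\mathbb{R}^N\setminus\overline\Omega.$$ Then $v\in C(\mathbb{R}^N)$, $v=v_0$ on $\overline\Omega$, and $\int_{(0,1)}\mathscr N_sv(x)\,d\mu(s)=0$ for every $x\in\mathbb{R}^N\setminus\overline\Omega$.
   Context: $\mu$ is a nonnegative, nontrivial finite Borel measure on $(0,1)$. For $s\in(0,1)$, $c_{N,s}:=-\frac{2^{2s-1}\Gamma(\frac{N+2s}{2})}{\pi^{N/2}\Gamma(-s)}>0$. For $x\in\mathbb{R}^N\setminus\overline\Omega$, $\mathscr N_sv(x):=c_{N,s}\int_\Omega\frac{v(x)-v(y)}{|x-y|^{N+2s}}dy$. *)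

theory Defs
  imports "HOL-Analysis.Analysis"
begin

definition cNs :: "nat \<Rightarrow> real \<Rightarrow> real" where
  "cNs n s = - (2 powr (2 * s - 1) * Gamma ((real n + 2 * s) / 2))
                / (pi powr (real n / 2) * Gamma (- s))"

definition bounded_domain :: "'n::euclidean_space set \<Rightarrow> bool" where
  "bounded_domain \<Omega> \<longleftrightarrow> open \<Omega> \<and> connected \<Omega> \<and> \<Omega> \<noteq> {} \<and> bounded \<Omega>"

text \<open>C^1 boundary: near every boundary point, after choosing a unit direction e,
  \<Omega> is the supergraph (in direction e) of a C^1 function defined on the hyperplane
  orthogonal to e (represented as a C^1 function on the whole space depending only on
  the component orthogonal to e).\<close>
definition C1_boundary :: "'n::euclidean_space set \<Rightarrow> bool" where
  "C1_boundary \<Omega> \<longleftrightarrow>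
     (\<forall>p\<in>frontier \<Omega>. \<exists>r>0. \<exists>e::'n. \<exists>g::'n \<Rightarrow> real. \<exists>Dg::'n \<Rightarrow> ('n \<Rightarrow>\<^sub>L real).
        norm e = 1 \<and>
        (\<forall>x. g x = g (x - (x \<bullet> e) *\<^sub>R e)) \<and>
        (\<forall>x. (g has_derivative blinfun_apply (Dg x)) (at x)) \<and>
        continuous_on UNIV Dg \<and>
        \<Omega> \<inter> ball p r = {x \<in> ball p r. x \<bullet> e > g x})"

definition ext_v :: "'n::euclidean_space set \<Rightarrow> real measure \<Rightarrow> ('n \<Rightarrow> real) \<Rightarrow> 'n \<Rightarrow> real" where
  "ext_v \<Omega> \<mu> v0 x =
     (if x \<in> closure \<Omega> then v0 x
      else (LINT s:{0<..<1}|\<mu>. cNs DIM('n) s *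
               (LINT y:\<Omega>|lborel. v0 y / norm (x - y) powr (real DIM('n) + 2 * s)))
         / (LINT s:{0<..<1}|\<mu>. cNs DIM('n) s *
               (LINT y:\<Omega>|lborel. 1 / norm (x - y) powr (real DIM('n) + 2 * s))))"

definition nonlocal_neumann :: "'n::euclidean_space set \<Rightarrow> real \<Rightarrow> ('n \<Rightarrow> real) \<Rightarrow> 'n \<Rightarrow> real" where
  "nonlocal_neumann \<Omega> s v x =
     cNs DIM('n) s * (LINT y:\<Omega>|lborel. (v x - v y) / norm (x - y) powr (real DIM('n) + 2 * s))"

end

theory Submission
  imports Defs
begin

text \<open>For x outside the closure of \<Omega>, ext_v x is an average of v0 over \<Omega> against the
  positive weight c(N,s) |x - y|^(-N-2s) d\<mu>(s) dy. Hence the \<mu>-integral of the nonlocal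
  Neumann derivative is ext_v x times the total weight minus the weighted integral of v0, which
  vanishes. Both weighted integrals depend continuously on x, so continuity away from the
  boundary is routine. At a boundary point p the C^1 boundary provides interior balls
  B(p + t e, c t) for 0 < t \<le> r0; those with t = r0/2^k are pairwise disjoint and each
  contributes the same amount to the integral of |x - y|^(-N) over \<Omega> once |x - p| < r0/2^k.
  So the total weight tends to infinity as x \<rightarrow> p, while the weight of the points y far from p
  stays bounded: the average concentrates near p, where v0 is close to v0 p.\<close>

lemma cNs_eq_rGamma:
  "cNs n s = - (2 powr (2 * s - 1) * Gamma ((real n + 2 * s) / 2) * rGamma (- s)) / pi powr (real n / 2)"
  unfolding cNs_def Gamma_def[of "-s"]
  by (cases "rGamma (-s) = 0") (simp_all add: field_simps)

lemma continuous_on_cNs: "n \<ge> 1 \<Longrightarrow> continuous_on {0..1} (cNs n)"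
  unfolding cNs_eq_rGamma
  by (intro continuous_at_imp_continuous_on ballI continuous_intros)
     (auto elim!: nonpos_Ints_cases simp: field_simps)

lemma cNs_pos:
  assumes "n \<ge> 1" "0 < s" "s < 1"
  shows "cNs n s > 0"
proof -
  have "- s \<notin> \<int>\<^sub>\<le>\<^sub>0"
  proof
    assume "- s \<in> \<int>\<^sub>\<le>\<^sub>0"
    then obtain m where "- s = of_int m" by (auto elim!: nonpos_Ints_cases)
    with assms have "-1 < m" "m < 0" by linarith+
    then show False by simp
  qed
  then have "Gamma (- s + 1) = - s * Gamma (- s)" by (rule Gamma_plus1)
  moreover have "Gamma (- s + 1) > 0" using assms by simp
  ultimately have "Gamma (- s) < 0" using assms by (simp add: zero_less_mult_iff mult_less_0_iff)
  moreover have "Gamma ((real n + 2 * s) / 2) > 0" using assms by simp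
  ultimately show ?thesis unfolding cNs_def by (intro divide_neg_neg mult_pos_neg) auto
qed

lemma set_integrable_bounded:
  fixes f :: "'a \<Rightarrow> real"
  assumes "A \<in> sets M" "emeasure M A < \<infinity>" "(\<lambda>x. indicator A x * f x) \<in> borel_measurable M"
    and "\<And>x. x \<in> A \<Longrightarrow> \<bar>f x\<bar> \<le> B"
  shows "set_integrable M A f"
  unfolding set_integrable_def
  by (rule integrableI_bounded_set[where A=A and B=B]) (use assms in \<open>auto simp: indicator_def\<close>)

lemma set_integrable_const_real:
  "A \<in> sets M \<Longrightarrow> emeasure M A < \<infinity> \<Longrightarrow> set_integrable M A (\<lambda>_. c :: real)"
  by (rule set_integrable_bounded[where B="\<bar>c\<bar>"]) auto

lemma set_integral_abs_le_measure:
  fixes f :: "'a \<Rightarrow> real"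
  assumes "set_integrable M A f" "A \<in> sets M" "emeasure M A < \<infinity>" "\<And>x. x \<in> A \<Longrightarrow> \<bar>f x\<bar> \<le> B"
  shows "\<bar>LINT x:A|M. f x\<bar> \<le> B * measure M A"
proof -
  have "\<bar>LINT x:A|M. f x\<bar> \<le> (LINT x:A|M. \<bar>f x\<bar>)"
    using set_integral_norm_bound[OF assms(1)] by simp
  also have "\<dots> \<le> (LINT x:A|M. B)"
  proof (rule set_integral_mono)
    show "set_integrable M A (\<lambda>x. B)" using assms by (intro set_integrable_const_real)
  qed (use assms set_integrable_abs in auto)
  also have "\<dots> = B * measure M A" using assms by (simp add: set_integral_const)
  finally show ?thesis .
qed

lemma set_integral_abs_diff_le:
  fixes f g h :: "'a \<Rightarrow> real"
  assumes f: "set_integrable M A f" and g: "set_integrable M A g" and h: "set_integrable M A h"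
    and le: "\<And>x. x \<in> A \<Longrightarrow> \<bar>f x - c * g x\<bar> \<le> h x"
  shows "\<bar>(LINT x:A|M. f x) - c * (LINT x:A|M. g x)\<bar> \<le> (LINT x:A|M. h x)"
proof -
  have fg: "set_integrable M A (\<lambda>x. f x - c * g x)" using f g by auto
  have "(LINT x:A|M. f x) - c * (LINT x:A|M. g x) = (LINT x:A|M. f x - c * g x)"
    using f g by (simp add: set_integral_diff)
  also have "\<bar>\<dots>\<bar> \<le> (LINT x:A|M. \<bar>f x - c * g x\<bar>)"
    using set_integral_norm_bound[OF fg] by simp
  also have "\<dots> \<le> (LINT x:A|M. h x)"
    using fg h le by (intro set_integral_mono set_integrable_abs)
  finally show ?thesis .
qed

lemma isCont_set_integral_param:
  fixes g :: "'p::metric_space \<Rightarrow> 'a \<Rightarrow> real"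
  assumes A: "A \<in> sets M" "emeasure M A < \<infinity>" and d: "0 < d"
    and meas: "\<And>x. x \<in> ball x0 d \<Longrightarrow> (\<lambda>y. indicator A y * g x y) \<in> borel_measurable M"
    and bound: "\<And>x y. x \<in> ball x0 d \<Longrightarrow> y \<in> A \<Longrightarrow> \<bar>g x y\<bar> \<le> B"
    and cont: "\<And>y. y \<in> A \<Longrightarrow> isCont (\<lambda>x. g x y) x0"
  shows "isCont (\<lambda>x. LINT y:A|M. g x y) x0"
  unfolding continuous_at_sequentially comp_def
proof (intro allI impI)
  fix X assume X: "X \<longlonglongrightarrow> x0"
  then have "eventually (\<lambda>n. X n \<in> ball x0 d) sequentially"
    using d by (intro topological_tendstoD) auto
  then obtain N where N: "\<And>n. N \<le> n \<Longrightarrow> X n \<in> ball x0 d"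
    by (auto simp: eventually_sequentially)
  have "(\<lambda>n. LINT y:A|M. g (X (n + N)) y) \<longlonglongrightarrow> (LINT y:A|M. g x0 y)"
    unfolding set_lebesgue_integral_def
  proof (rule integral_dominated_convergence[where w="\<lambda>y. indicator A y * B"])
    show "(\<lambda>y. indicator A y *\<^sub>R g x0 y) \<in> borel_measurable M"
      using meas[of x0] d by simp
    show "(\<lambda>y. indicator A y *\<^sub>R g (X (n + N)) y) \<in> borel_measurable M" for n
      using meas[OF N[of "n + N"]] by simp
    show "integrable M (\<lambda>y. indicator A y * B)"
      using A by (intro integrable_mult_left integrable_real_indicator) auto
    show "AE y in M. (\<lambda>n. indicator A y *\<^sub>R g (X (n + N)) y) \<longlonglongrightarrow> indicator A y *\<^sub>R g x0 y"
    proof (intro AE_I2)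
      fix y
      have lim: "(\<lambda>n. X (n + N)) \<longlonglongrightarrow> x0" using X by (rule LIMSEQ_ignore_initial_segment)
      show "(\<lambda>n. indicator A y *\<^sub>R g (X (n + N)) y) \<longlonglongrightarrow> indicator A y *\<^sub>R g x0 y"
      proof (cases "y \<in> A")
        case True
        then show ?thesis using isCont_tendsto_compose[OF cont[OF True] lim] by simp
      qed simp
    qed
    show "AE y in M. norm (indicator A y *\<^sub>R g (X (n + N)) y) \<le> indicator A y * B" for n
      using bound[OF N[of "n + N"]] by (intro AE_I2) (auto simp: indicator_def)
  qed
  then show "(\<lambda>n. LINT y:A|M. g (X n) y) \<longlonglongrightarrow> (LINT y:A|M. g x0 y)"
    by (rule LIMSEQ_offset)
qed

lemma set_integral_pos:
  fixes f :: "'a \<Rightarrow> real"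
  assumes f: "set_integrable M A f" and A: "A \<in> sets M" "emeasure M A > 0"
    and pos: "\<And>x. x \<in> A \<Longrightarrow> f x > 0"
  shows "(LINT x:A|M. f x) > 0"
proof -
  let ?g = "\<lambda>x. indicator A x *\<^sub>R f x"
  have i: "integrable M ?g" using f by (simp add: set_integrable_def)
  have nn: "\<And>x. ?g x \<ge> 0" using pos by (auto simp: indicator_def less_imp_le)
  have "{x \<in> space M. ?g x \<noteq> 0} = A"
    using sets.sets_into_space[OF A(1)] pos by (force simp: indicator_def)
  then have "(LINT x|M. ?g x) \<noteq> 0" using integral_0_iff[OF i] A nn by auto
  moreover have "(LINT x|M. ?g x) \<ge> 0" using nn by (intro integral_nonneg_AE) auto
  ultimately show ?thesis unfolding set_lebesgue_integral_def by linarith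
qed

lemma set_integral_sum_indicator:
  fixes a :: "'i \<Rightarrow> real"
  assumes "finite I" "\<And>i. i \<in> I \<Longrightarrow> B i \<in> sets M" "\<And>i. i \<in> I \<Longrightarrow> emeasure M (B i) < \<infinity>"
    and "\<And>i. i \<in> I \<Longrightarrow> B i \<subseteq> A"
  shows "set_integrable M A (\<lambda>x. \<Sum>i\<in>I. a i * indicator (B i) x)"
    and "(LINT x:A|M. \<Sum>i\<in>I. a i * indicator (B i) x) = (\<Sum>i\<in>I. a i * measure M (B i))"
proof -
  let ?G = "\<lambda>x. \<Sum>i\<in>I. a i * indicator (B i) x"
  have supp: "indicator A x *\<^sub>R ?G x = ?G x" for x
    using assms(4) by (cases "x \<in> A") (auto simp: indicator_def intro!: sum.neutral, blast)
  have "integrable M ?G"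
    using assms by (intro Bochner_Integration.integrable_sum integrable_mult_right integrable_real_indicator)
  then show "set_integrable M A ?G" unfolding set_integrable_def supp .
  show "(LINT x:A|M. ?G x) = (\<Sum>i\<in>I. a i * measure M (B i))"
    unfolding set_lebesgue_integral_def supp using assms
    by (subst Bochner_Integration.integral_sum) auto
qed

lemma inverse_powr_le_max:
  fixes d u a b :: real
  assumes "0 < d" "d \<le> u" "0 \<le> a" "a \<le> b"
  shows "1 / u powr a \<le> max 1 ((1/d) powr b)"
proof -
  have "u powr a \<ge> d powr a" using assms by (intro powr_mono2) auto
  then have "1 / u powr a \<le> 1 / d powr a" using assms by (intro divide_left_mono) auto
  also have "\<dots> = (1/d) powr a" using assms by (simp add: powr_divide)
  also have "\<dots> \<le> max 1 ((1/d) powr b)"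
  proof (cases "1/d \<ge> 1")
    case True then show ?thesis using assms by (intro max.coboundedI2 powr_mono) auto
  next
    case False
    then have "(1/d) powr a \<le> (1/d) powr 0" using assms by (intro powr_mono') auto
    then show ?thesis using assms by simp
  qed
  finally show ?thesis .
qed

lemma outside_closure_uniform_dist:
  fixes \<Omega> :: "'a::real_normed_vector set"
  assumes "x \<notin> closure \<Omega>"
  obtains d where "d > 0" "\<And>x'. x' \<in> ball x d \<Longrightarrow> x' \<notin> closure \<Omega>"
    "\<And>x' y. x' \<in> ball x d \<Longrightarrow> y \<in> \<Omega> \<Longrightarrow> d \<le> norm (x' - y)"
proof -
  obtain e where e: "e > 0" "ball x e \<subseteq> - closure \<Omega>"
    using open_contains_ball assms by (metis ComplI open_Compl closed_closure)
  have "e/2 \<le> norm (x' - y)" if x': "x' \<in> ball x (e/2)" and y: "y \<in> \<Omega>" for x' y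
  proof -
    have "y \<notin> ball x e" using e y closure_subset[of \<Omega>] by blast
    then have "e \<le> norm (x - y)" by (simp add: dist_norm)
    moreover have "norm (x - x') < e/2" using x' by (simp add: dist_norm)
    moreover have "norm (x - y) \<le> norm (x - x') + norm (x' - y)" by (rule norm_diff_triangle_le) auto
    ultimately show ?thesis by linarith
  qed
  moreover have "ball x (e/2) \<subseteq> - closure \<Omega>"
    using e subset_ball[of "e/2" e x] by auto
  ultimately show ?thesis using e by (intro that[of "e/2"]) auto
qed

lemma outside_closure_dist:
  fixes \<Omega> :: "'a::real_normed_vector set"
  assumes "x \<notin> closure \<Omega>"
  obtains d where "d > 0" "\<And>y. y \<in> \<Omega> \<Longrightarrow> d \<le> norm (x - y)"
  using outside_closure_uniform_dist[OF assms] centre_in_ball by metis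

lemma graph_boundary_point_on_graph:
  fixes \<Omega> :: "'a::real_inner set"
  assumes "open \<Omega>" "p \<in> frontier \<Omega>" "r > 0" "continuous_on UNIV g"
    and loc: "\<Omega> \<inter> ball p r = {x \<in> ball p r. x \<bullet> e > g x}"
  shows "g p = p \<bullet> e"
proof -
  have "p \<notin> \<Omega>" "p \<in> closure \<Omega>" using assms by (auto simp: frontier_def interior_open)
  then have "p \<bullet> e \<le> g p" using loc assms by auto
  have "p \<in> closure (ball p r \<inter> \<Omega>)"
    using open_Int_closure_subset[of "ball p r" \<Omega>] \<open>p \<in> closure \<Omega>\<close> assms by auto
  moreover have "ball p r \<inter> \<Omega> \<subseteq> {x. g x \<le> x \<bullet> e}"
    using equalityD1[OF loc] by (auto intro: less_imp_le)
  moreover have "closed {x. g x \<le> x \<bullet> e}"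
    by (intro closed_Collect_le assms continuous_intros)
  ultimately have "p \<in> {x. g x \<le> x \<bullet> e}" by (meson closure_minimal subsetD)
  then have "g p \<le> p \<bullet> e" by simp
  with \<open>p \<bullet> e \<le> g p\<close> show ?thesis by simp
qed

lemma C1_lipschitz_on_cball:
  fixes g :: "'a::euclidean_space \<Rightarrow> real"
  assumes gd: "\<And>x. (g has_derivative blinfun_apply (Dg x)) (at x)" and Dgc: "continuous_on UNIV Dg"
  obtains L where "L \<ge> 0" "\<And>z. z \<in> cball p 1 \<Longrightarrow> \<bar>g z - g p\<bar> \<le> L * norm (z - p)"
proof -
  have "bounded (Dg ` cball p 1)"
    by (intro compact_imp_bounded compact_continuous_image continuous_on_subset[OF Dgc]) auto
  then obtain L0 where L0: "\<forall>z\<in>cball p 1. norm (Dg z) \<le> L0" by (auto simp: bounded_iff)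
  define L where "L = max L0 0"
  have L: "\<And>z. z \<in> cball p 1 \<Longrightarrow> onorm (blinfun_apply (Dg z)) \<le> L"
    using L0 by (auto simp: L_def norm_blinfun.rep_eq[symmetric] intro: max.coboundedI1)
  have "\<bar>g z - g p\<bar> \<le> L * norm (z - p)" if "z \<in> cball p 1" for z
    using differentiable_bound[OF convex_cball has_derivative_at_withinI[OF gd] L that, of p]
    by simp
  then show ?thesis using that[of L] by (simp add: L_def)
qed

text \<open>A point of the ball B(p + t e, c t) lies within 2 c t of the line through p in direction e,
  so the Lipschitz constant L of g keeps the graph below height 2 L c t < t - c t there.\<close>
lemma graph_boundary_interior_balls:
  fixes \<Omega> :: "'n::euclidean_space set" and e :: 'n and g :: "'n \<Rightarrow> real"
  assumes "open \<Omega>" "p \<in> frontier \<Omega>" "r > 0" and e: "norm e = 1"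
    and gproj: "\<forall>x. g x = g (x - (x \<bullet> e) *\<^sub>R e)"
    and gd: "\<forall>x. (g has_derivative blinfun_apply (Dg x)) (at x)"
    and Dgc: "continuous_on UNIV Dg"
    and loc: "\<Omega> \<inter> ball p r = {x \<in> ball p r. x \<bullet> e > g x}"
  obtains c r0 where "0 < c" "c \<le> 1/4" "0 < r0" "r0 \<le> 1/3"
    "\<And>t. 0 < t \<Longrightarrow> t \<le> r0 \<Longrightarrow> ball (p + t *\<^sub>R e) (c * t) \<subseteq> \<Omega>"
proof -
  have "continuous_on UNIV g"
    using gd by (intro continuous_at_imp_continuous_on ballI has_derivative_continuous) blast
  then have gp: "g p = p \<bullet> e" using graph_boundary_point_on_graph assms by blast
  obtain L where L: "L \<ge> 0" "\<And>z. z \<in> cball p 1 \<Longrightarrow> \<bar>g z - g p\<bar> \<le> L * norm (z - p)"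
    using C1_lipschitz_on_cball gd Dgc by metis
  define c where "c = 1 / (4 * (L + 1))"
  define r0 where "r0 = min (1/3) (r/2)"
  have c: "0 < c" "c \<le> 1/4" "c * (2 * L + 1) < 1" using L by (auto simp: c_def field_simps)
  have r0: "0 < r0" "r0 \<le> 1/3" "r0 \<le> r/2" using \<open>r > 0\<close> by (auto simp: r0_def)
  have ee: "e \<bullet> e = 1" using e by (simp add: norm_eq_sqrt_inner)
  have "y \<in> \<Omega>" if t: "0 < t" "t \<le> r0" and y: "y \<in> ball (p + t *\<^sub>R e) (c * t)" for t y
  proof -
    define z where "z = y - (p + t *\<^sub>R e)"
    have z: "norm z < c * t" using y by (simp add: z_def dist_norm norm_minus_commute)
    have yz: "y = p + t *\<^sub>R e + z" by (simp add: z_def)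
    have ze: "\<bar>z \<bullet> e\<bar> \<le> norm z" using Cauchy_Schwarz_ineq2[of z e] e by simp
    have ct: "c * t \<le> t / 4" using c t by (simp add: mult_right_mono)
    have "norm (y - p) \<le> t + norm z" using e t by (simp add: yz norm_triangle_le)
    then have "norm (y - p) < r" using z ct t r0 by linarith
    then have yb: "y \<in> ball p r" by (simp add: dist_norm norm_minus_commute)
    define q where "q = y - ((y - p) \<bullet> e) *\<^sub>R e"
    have "q - (q \<bullet> e) *\<^sub>R e = y - (y \<bullet> e) *\<^sub>R e"
      by (simp add: q_def inner_diff_left ee algebra_simps)
    then have gq: "g q = g y" using gproj by metis
    have "q - p = z - (z \<bullet> e) *\<^sub>R e" by (simp add: q_def yz inner_add_left ee algebra_simps)
    then have "norm (q - p) \<le> norm z + norm ((z \<bullet> e) *\<^sub>R e)" by (metis norm_triangle_ineq4)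
    then have nqp: "norm (q - p) \<le> 2 * norm z" using ze e by simp
    then have "norm (q - p) \<le> 1" using z ct t r0 by linarith
    then have "q \<in> cball p 1" by (simp add: dist_norm norm_minus_commute)
    then have "g y \<le> p \<bullet> e + L * (2 * norm z)"
      using L(2)[of q] mult_left_mono[OF nqp L(1)] gp gq by linarith
    also have "\<dots> \<le> p \<bullet> e + L * (2 * (c * t))" using z L(1) by (intro add_left_mono mult_left_mono) auto
    also have "\<dots> < p \<bullet> e + t - c * t"
      using mult_strict_right_mono[OF c(3) t(1)] by (simp add: algebra_simps)
    also have "\<dots> \<le> y \<bullet> e" using ze z by (simp add: yz inner_add_left ee)
    finally show "y \<in> \<Omega>" using yb loc by blast
  qed
  then show ?thesis using that c r0 by blast
qed

lemma scaled_balls_disjoint: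
  fixes p e :: "'a::real_normed_vector"
  assumes "norm e = 1" "c \<le> 1/4" "0 < t'" "t' \<le> t / 2"
  shows "ball (p + t *\<^sub>R e) (c * t) \<inter> ball (p + t' *\<^sub>R e) (c * t') = {}"
proof (rule ccontr)
  assume "ball (p + t *\<^sub>R e) (c * t) \<inter> ball (p + t' *\<^sub>R e) (c * t') \<noteq> {}"
  then obtain y where y: "norm (y - (p + t *\<^sub>R e)) < c * t" "norm (y - (p + t' *\<^sub>R e)) < c * t'"
    by (auto simp: dist_norm norm_minus_commute)
  have "\<bar>t - t'\<bar> = norm ((y - (p + t' *\<^sub>R e)) - (y - (p + t *\<^sub>R e)))"
    using assms by (simp add: scaleR_diff_left[symmetric])
  also have "\<dots> \<le> norm (y - (p + t' *\<^sub>R e)) + norm (y - (p + t *\<^sub>R e))"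
    by (rule norm_triangle_ineq4)
  finally have "\<bar>t - t'\<bar> < c * t + c * t'" using y by linarith
  moreover have "c * t \<le> t / 4" "c * t' \<le> t' / 4"
    using assms by (simp_all add: mult_right_mono)
  ultimately show False using assms by linarith
qed

definition dyadic_ball :: "'a::real_normed_vector \<Rightarrow> 'a \<Rightarrow> real \<Rightarrow> real \<Rightarrow> nat \<Rightarrow> 'a set" where
  "dyadic_ball p e c r0 k = ball (p + (r0 / 2^k) *\<^sub>R e) (c * (r0 / 2^k))"

lemma disjoint_family_dyadic_ball:
  assumes "norm e = 1" "c \<le> 1/4" "0 < r0"
  shows "disjoint_family (dyadic_ball p e c r0)"
proof -
  have "dyadic_ball p e c r0 j \<inter> dyadic_ball p e c r0 k = {}" if "j < k" for j k
  proof -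
    have "r0 / 2^k \<le> r0 / 2 ^ Suc j"
      using assms(3) that by (intro divide_left_mono power_increasing) auto
    then show ?thesis unfolding dyadic_ball_def using assms by (intro scaled_balls_disjoint) auto
  qed
  then show ?thesis unfolding disjoint_family_on_def by (metis Int_commute nat_neq_iff)
qed

lemma inverse_powr_ge_on_ball:
  fixes p e x y :: "'a::real_normed_vector"
  assumes "norm e = 1" "0 < t" "3 * t \<le> 1" "c \<le> 1" "norm (x - p) < t"
    and "y \<in> ball (p + t *\<^sub>R e) (c * t)" "x \<noteq> y" "0 \<le> b"
  shows "1 / (3 * t) ^ n \<le> 1 / norm (x - y) powr (real n + b)"
proof -
  have "y - p = (y - (p + t *\<^sub>R e)) + t *\<^sub>R e" by simp
  then have "norm (y - p) \<le> norm (y - (p + t *\<^sub>R e)) + norm (t *\<^sub>R e)"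
    by (metis norm_triangle_ineq)
  then have "norm (y - p) < c * t + t"
    using assms by (simp add: dist_norm norm_minus_commute)
  moreover have "x - y = (x - p) - (y - p)" by simp
  then have "norm (x - y) \<le> norm (x - p) + norm (y - p)" by (metis norm_triangle_ineq4)
  moreover have "c * t \<le> t" using assms by (simp add: mult_right_mono)
  ultimately have n3: "norm (x - y) \<le> 3 * t" using assms by linarith
  have "norm (x - y) powr (real n + b) \<le> (3 * t) powr (real n + b)"
    using n3 assms by (intro powr_mono2) auto
  also have "\<dots> \<le> (3 * t) powr (real n)" using assms by (intro powr_mono') auto
  also have "\<dots> = (3 * t) ^ n" using assms by (simp add: powr_realpow)
  finally show ?thesis using assms by (intro divide_left_mono mult_pos_pos) auto
qed

lemma deviation_over_kernel_le:
  fixes x y p :: "'a::real_normed_vector"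
  assumes "\<bar>u - w\<bar> \<le> 2 * M" "dist y p < \<rho> \<Longrightarrow> \<bar>u - w\<bar> \<le> \<epsilon>" "0 \<le> \<epsilon>" "0 < \<rho>"
    and "norm (x - p) < \<rho>/2" "x \<noteq> y" "0 \<le> a" "a \<le> b"
  shows "\<bar>u - w\<bar> / norm (x - y) powr a \<le> \<epsilon> / norm (x - y) powr a + 2 * M * max 1 ((2/\<rho>) powr b)"
proof -
  have K: "norm (x - y) powr a > 0" using assms by simp
  have R: "0 \<le> 2 * M * max 1 ((2/\<rho>) powr b)" using assms by (simp add: max_def)
  show ?thesis
  proof (cases "dist y p < \<rho>")
    case True
    then have "\<bar>u - w\<bar> / norm (x - y) powr a \<le> \<epsilon> / norm (x - y) powr a"
      using assms K by (simp add: divide_right_mono)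
    then show ?thesis using R by linarith
  next
    case False
    have "x - y = (x - p) - (y - p)" by simp
    then have "norm (y - p) \<le> norm (x - y) + norm (x - p)" by (metis norm_triangle_ineq4 add.commute norm_minus_commute diff_diff_eq2 diff_add_cancel)
    then have "\<rho>/2 \<le> norm (x - y)" using False assms by (simp add: dist_norm)
    then have "1 / norm (x - y) powr a \<le> max 1 ((2/\<rho>) powr b)"
      using inverse_powr_le_max[of "\<rho>/2" "norm (x - y)" a b] assms by simp
    then have "\<bar>u - w\<bar> * (1 / norm (x - y) powr a) \<le> 2 * M * max 1 ((2/\<rho>) powr b)"
      using assms by (intro mult_mono) auto
    moreover have "0 \<le> \<epsilon> / norm (x - y) powr a" using assms K by simp
    ultimately show ?thesis by simp
  qed
qed

definition kernel_integral :: "'n::euclidean_space set \<Rightarrow> ('n \<Rightarrow> real) \<Rightarrow> 'n \<Rightarrow> real \<Rightarrow> real" where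
  "kernel_integral \<Omega> f x s = (LINT y:\<Omega>|lborel. f y / norm (x - y) powr (real DIM('n) + 2 * s))"

definition mu_kernel_integral ::
    "'n::euclidean_space set \<Rightarrow> real measure \<Rightarrow> ('n \<Rightarrow> real) \<Rightarrow> 'n \<Rightarrow> real" where
  "mu_kernel_integral \<Omega> \<mu> f x = (LINT s:{0<..<1}|\<mu>. cNs DIM('n) s * kernel_integral \<Omega> f x s)"

lemma ext_v_eq_mu_kernel_integral:
  "x \<notin> closure \<Omega> \<Longrightarrow>
     ext_v \<Omega> \<mu> v0 x = mu_kernel_integral \<Omega> \<mu> v0 x / mu_kernel_integral \<Omega> \<mu> (\<lambda>_. 1) x"
  by (simp add: ext_v_def mu_kernel_integral_def kernel_integral_def)

lemma borel_measurable_kernel: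
  fixes \<Omega> :: "'n::euclidean_space set"
  assumes "open \<Omega>" "x \<notin> closure \<Omega>" "continuous_on \<Omega> f"
  shows "(\<lambda>y. indicator \<Omega> y * (f y / norm (x - y) powr a)) \<in> borel_measurable lborel"
proof -
  have "\<forall>y\<in>\<Omega>. norm (x - y) > 0" using assms closure_subset by force
  then have "continuous_on \<Omega> (\<lambda>y. f y / norm (x - y) powr a)"
    by (intro continuous_intros assms) auto
  then have "(\<lambda>y. indicator \<Omega> y *\<^sub>R (f y / norm (x - y) powr a)) \<in> borel_measurable borel"
    using assms by (intro borel_measurable_continuous_on_indicator) auto
  then show ?thesis by simp
qed

lemma borel_measurable_kernel_integral:
  fixes \<Omega> :: "'n::euclidean_space set"
  assumes "open \<Omega>" "x \<notin> closure \<Omega>" "continuous_on \<Omega> f"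
  shows "kernel_integral \<Omega> f x \<in> borel_measurable borel"
proof -
  have "\<forall>p\<in>UNIV \<times> \<Omega>. norm (x - snd p) > 0" using assms closure_subset by force
  moreover have "continuous_on (UNIV \<times> \<Omega>) (\<lambda>p. f (snd p))"
    by (rule continuous_on_compose2[OF assms(3) continuous_on_snd]) auto
  ultimately have "continuous_on (UNIV \<times> \<Omega>)
      (\<lambda>p. f (snd p) / norm (x - snd p) powr (real DIM('n) + 2 * fst p))"
    by (intro continuous_intros) auto
  then have "(\<lambda>p. indicator (UNIV \<times> \<Omega>) p *\<^sub>R (f (snd p) / norm (x - snd p) powr (real DIM('n) + 2 * fst p)))
      \<in> borel_measurable borel"
    using assms by (intro borel_measurable_continuous_on_indicator borel_open open_Times) auto
  then have "(\<lambda>(s, y). indicator \<Omega> y *\<^sub>R (f y / norm (x - y) powr (real DIM('n) + 2 * s)))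
      \<in> borel_measurable (borel \<Otimes>\<^sub>M lborel)"
    by (subst measurable_cong_sets[OF sets_pair_measure_cong[OF refl sets_lborel] refl])
       (simp add: borel_prod indicator_times split_beta')
  from lborel.borel_measurable_lebesgue_integral[OF this]
  show ?thesis unfolding kernel_integral_def set_lebesgue_integral_def by simp
qed

locale kernel_setting =
  fixes \<Omega> :: "'n::euclidean_space set" and \<mu> :: "real measure"
  assumes sets_\<mu>: "sets \<mu> = sets borel" and finite_\<mu>: "finite_measure \<mu>"
    and \<mu>_pos: "emeasure \<mu> {0<..<1} > 0"
    and open_\<Omega>: "open \<Omega>" and bounded_\<Omega>: "bounded \<Omega>" and \<Omega>_nonempty: "\<Omega> \<noteq> {}"
begin

lemma DIM_ge_1: "DIM('n) \<ge> 1"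
  using DIM_positive[where 'a='n] by linarith

lemma \<Omega>_sets: "\<Omega> \<in> sets lborel" using open_\<Omega> by simp

lemma \<Omega>_finite: "emeasure lborel \<Omega> < \<infinity>" using bounded_\<Omega> by (rule emeasure_bounded_finite)

lemma emeasure_\<Omega>_pos: "0 < emeasure lborel \<Omega>"
proof -
  obtain y r where "r > 0" "ball y r \<subseteq> \<Omega>"
    using open_\<Omega> \<Omega>_nonempty open_contains_ball by blast
  then have "measure lborel (ball y r) \<le> measure lborel \<Omega>"
    using \<Omega>_sets \<Omega>_finite by (intro measure_mono_fmeasurable) (auto simp: fmeasurable_def)
  moreover have "measure lborel (ball y r) > 0" using \<open>r > 0\<close> by (rule content_ball_pos)
  ultimately have "0 < measure lborel \<Omega>" by linarith
  then show ?thesis using \<Omega>_finite by (subst emeasure_eq_ennreal_measure) auto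
qed

lemma unit_interval_sets: "{0<..<1::real} \<in> sets \<mu>" using sets_\<mu> by simp

lemma unit_interval_finite: "emeasure \<mu> {0<..<1::real} < \<infinity>"
  using finite_measure.emeasure_finite[OF finite_\<mu>] by (simp add: top.not_eq_extremum)

lemma cNs_bounded: obtains W where "\<And>s. s \<in> {0..1} \<Longrightarrow> \<bar>cNs DIM('n) s\<bar> \<le> W"
proof -
  have "bounded (cNs DIM('n) ` {0..1})"
    by (intro compact_imp_bounded compact_continuous_image continuous_on_cNs DIM_ge_1) auto
  then obtain W where "\<forall>s\<in>{0..1}. \<bar>cNs DIM('n) s\<bar> \<le> W" by (auto simp: bounded_iff)
  then show ?thesis using that by blast
qed

lemma borel_measurable_cNs: "(\<lambda>s. indicator {0<..<1} s * cNs DIM('n) s) \<in> borel_measurable \<mu>"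
proof -
  have "continuous_on {0<..<1} (cNs DIM('n))"
    by (rule continuous_on_subset[OF continuous_on_cNs[OF DIM_ge_1]]) auto
  then have "(\<lambda>s. indicator {0<..<1} s *\<^sub>R cNs DIM('n) s) \<in> borel_measurable borel"
    by (intro borel_measurable_continuous_on_indicator) auto
  then show ?thesis by (simp add: measurable_cong_sets[OF sets_\<mu> refl])
qed

lemma cNs_set_integrable: "set_integrable \<mu> {0<..<1} (cNs DIM('n))"
proof -
  obtain W where "\<And>s. s \<in> {0..1} \<Longrightarrow> \<bar>cNs DIM('n) s\<bar> \<le> W" using cNs_bounded by blast
  then show ?thesis
    by (intro set_integrable_bounded[OF unit_interval_sets unit_interval_finite borel_measurable_cNs,
        where B=W]) auto
qed

lemma cNs_integral_pos: "0 < (LINT s:{0<..<1}|\<mu>. cNs DIM('n) s)"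
  using cNs_set_integrable unit_interval_sets \<mu>_pos cNs_pos[OF DIM_ge_1] by (intro set_integral_pos) auto

context
  fixes f :: "'n \<Rightarrow> real" and M :: real
  assumes f_cont: "continuous_on \<Omega> f" and f_bounded: "\<And>y. y \<in> \<Omega> \<Longrightarrow> \<bar>f y\<bar> \<le> M"
begin

lemma kernel_bounded:
  assumes "0 < d" "\<And>y. y \<in> \<Omega> \<Longrightarrow> d \<le> norm (x - y)" "0 \<le> s" "s \<le> 1" "y \<in> \<Omega>"
  shows "\<bar>f y / norm (x - y) powr (real DIM('n) + 2 * s)\<bar> \<le> M * max 1 ((1/d) powr (real DIM('n) + 2))"
proof -
  have "\<bar>f y / norm (x - y) powr (real DIM('n) + 2 * s)\<bar> = \<bar>f y\<bar> * (1 / norm (x - y) powr (real DIM('n) + 2 * s))"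
    by (simp add: abs_mult)
  also have "\<dots> \<le> M * max 1 ((1/d) powr (real DIM('n) + 2))"
    using assms f_bounded[of y] by (intro mult_mono inverse_powr_le_max) auto
  finally show ?thesis .
qed

lemma kernel_integrable:
  assumes "0 < d" "\<And>y. y \<in> \<Omega> \<Longrightarrow> d \<le> norm (x - y)" "0 \<le> s" "s \<le> 1"
  shows "set_integrable lborel \<Omega> (\<lambda>y. f y / norm (x - y) powr (real DIM('n) + 2 * s))"
proof (rule set_integrable_bounded[OF \<Omega>_sets \<Omega>_finite borel_measurable_kernel[OF open_\<Omega> _ f_cont]])
  show "x \<notin> closure \<Omega>"
    using assms by (force simp: closure_approachable dist_norm norm_minus_commute)
qed (use kernel_bounded assms in blast)

lemma kernel_integral_abs_le:
  assumes "0 < d" "\<And>y. y \<in> \<Omega> \<Longrightarrow> d \<le> norm (x - y)" "0 \<le> s" "s \<le> 1"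
  shows "\<bar>kernel_integral \<Omega> f x s\<bar> \<le> M * max 1 ((1/d) powr (real DIM('n) + 2)) * measure lborel \<Omega>"
  unfolding kernel_integral_def
  using kernel_integrable[OF assms] \<Omega>_sets \<Omega>_finite kernel_bounded[OF assms]
  by (rule set_integral_abs_le_measure)

lemma borel_measurable_mu_kernel:
  assumes "x \<notin> closure \<Omega>"
  shows "(\<lambda>s. indicator {0<..<1} s * (cNs DIM('n) s * kernel_integral \<Omega> f x s)) \<in> borel_measurable \<mu>"
proof -
  have "kernel_integral \<Omega> f x \<in> borel_measurable \<mu>"
    using borel_measurable_kernel_integral[OF open_\<Omega> assms f_cont]
    by (simp add: measurable_cong_sets[OF sets_\<mu> refl])
  then show ?thesis using borel_measurable_cNs by (simp add: mult.assoc[symmetric])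
qed

lemma mu_kernel_bounded:
  assumes "0 < d" "\<And>y. y \<in> \<Omega> \<Longrightarrow> d \<le> norm (x - y)" "s \<in> {0<..<1}"
    and W: "\<And>s. s \<in> {0..1} \<Longrightarrow> \<bar>cNs DIM('n) s\<bar> \<le> W"
  shows "\<bar>cNs DIM('n) s * kernel_integral \<Omega> f x s\<bar>
    \<le> W * (M * max 1 ((1/d) powr (real DIM('n) + 2)) * measure lborel \<Omega>)"
proof -
  have "0 \<le> W" by (rule order_trans[OF abs_ge_zero W[of 0]]) simp
  then show ?thesis
    unfolding abs_mult using assms kernel_integral_abs_le[OF assms(1,2)] by (intro mult_mono) auto
qed

lemma mu_kernel_integrable:
  assumes x: "x \<notin> closure \<Omega>"
  shows "set_integrable \<mu> {0<..<1} (\<lambda>s. cNs DIM('n) s * kernel_integral \<Omega> f x s)"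
proof -
  obtain d where "d > 0" "\<And>y. y \<in> \<Omega> \<Longrightarrow> d \<le> norm (x - y)"
    using outside_closure_dist[OF x] by blast
  moreover obtain W where "\<And>s. s \<in> {0..1} \<Longrightarrow> \<bar>cNs DIM('n) s\<bar> \<le> W" using cNs_bounded by blast
  ultimately show ?thesis
    by (intro set_integrable_bounded[OF unit_interval_sets unit_interval_finite
          borel_measurable_mu_kernel[OF x]]) (blast intro: mu_kernel_bounded)
qed

lemma isCont_kernel_integral:
  assumes "x0 \<notin> closure \<Omega>" "0 \<le> s" "s \<le> 1"
  shows "isCont (\<lambda>x. kernel_integral \<Omega> f x s) x0"
proof -
  obtain d where d: "d > 0" "\<And>x. x \<in> ball x0 d \<Longrightarrow> x \<notin> closure \<Omega>"
    "\<And>x y. x \<in> ball x0 d \<Longrightarrow> y \<in> \<Omega> \<Longrightarrow> d \<le> norm (x - y)"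
    using outside_closure_uniform_dist[OF assms(1)] by blast
  show ?thesis
    unfolding kernel_integral_def
  proof (rule isCont_set_integral_param[OF \<Omega>_sets \<Omega>_finite d(1)])
    show "(\<lambda>y. indicator \<Omega> y * (f y / norm (x - y) powr (real DIM('n) + 2 * s))) \<in> borel_measurable lborel"
      if "x \<in> ball x0 d" for x
      using borel_measurable_kernel[OF open_\<Omega> d(2)[OF that] f_cont] .
    show "\<bar>f y / norm (x - y) powr (real DIM('n) + 2 * s)\<bar> \<le> M * max 1 ((1/d) powr (real DIM('n) + 2))"
      if "x \<in> ball x0 d" "y \<in> \<Omega>" for x y
      using kernel_bounded[OF d(1) d(3)[OF that(1)] assms(2,3) that(2)] .
    show "isCont (\<lambda>x. f y / norm (x - y) powr (real DIM('n) + 2 * s)) x0" if "y \<in> \<Omega>" for y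
      using d(3)[of x0 y] that d(1) by (intro continuous_intros) auto
  qed
qed

lemma isCont_mu_kernel_integral:
  assumes "x0 \<notin> closure \<Omega>"
  shows "isCont (mu_kernel_integral \<Omega> \<mu> f) x0"
proof -
  obtain d where d: "d > 0" "\<And>x. x \<in> ball x0 d \<Longrightarrow> x \<notin> closure \<Omega>"
    "\<And>x y. x \<in> ball x0 d \<Longrightarrow> y \<in> \<Omega> \<Longrightarrow> d \<le> norm (x - y)"
    using outside_closure_uniform_dist[OF assms] by blast
  obtain W where W: "\<And>s. s \<in> {0..1} \<Longrightarrow> \<bar>cNs DIM('n) s\<bar> \<le> W" using cNs_bounded by blast
  show ?thesis
    unfolding mu_kernel_integral_def
  proof (rule isCont_set_integral_param[OF unit_interval_sets unit_interval_finite d(1)])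
    show "(\<lambda>s. indicator {0<..<1} s * (cNs DIM('n) s * kernel_integral \<Omega> f x s)) \<in> borel_measurable \<mu>"
      if "x \<in> ball x0 d" for x
      using borel_measurable_mu_kernel[OF d(2)[OF that]] .
    show "\<bar>cNs DIM('n) s * kernel_integral \<Omega> f x s\<bar>
        \<le> W * (M * max 1 ((1/d) powr (real DIM('n) + 2)) * measure lborel \<Omega>)"
      if "x \<in> ball x0 d" "s \<in> {0<..<1}" for x s
      using mu_kernel_bounded[OF d(1) d(3)[OF that(1)] that(2) W] .
    show "isCont (\<lambda>x. cNs DIM('n) s * kernel_integral \<Omega> f x s) x0" if "s \<in> {0<..<1}" for s
      using isCont_kernel_integral[OF assms] that by (intro continuous_intros) auto
  qed
qed

end

lemma kernel_integral_one_pos: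
  assumes "x \<notin> closure \<Omega>" "0 \<le> s" "s \<le> 1"
  shows "kernel_integral \<Omega> (\<lambda>_. 1) x s > 0"
proof -
  obtain d where d: "d > 0" "\<And>y. y \<in> \<Omega> \<Longrightarrow> d \<le> norm (x - y)"
    using outside_closure_dist[OF assms(1)] by blast
  show ?thesis
    unfolding kernel_integral_def
  proof (rule set_integral_pos[OF _ \<Omega>_sets emeasure_\<Omega>_pos])
    show "set_integrable lborel \<Omega> (\<lambda>y. 1 / norm (x - y) powr (real DIM('n) + 2 * s))"
      using kernel_integrable[of "\<lambda>_. 1" 1 d x s] d assms by simp
    show "0 < 1 / norm (x - y) powr (real DIM('n) + 2 * s)" if "y \<in> \<Omega>" for y
    proof -
      have "0 < norm (x - y)" using d(2)[OF that] d(1) by linarith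
      then show ?thesis by simp
    qed
  qed
qed

lemma mu_kernel_integral_one_pos:
  assumes "x \<notin> closure \<Omega>"
  shows "mu_kernel_integral \<Omega> \<mu> (\<lambda>_. 1) x > 0"
  unfolding mu_kernel_integral_def
proof (rule set_integral_pos[OF _ unit_interval_sets \<mu>_pos])
  show "set_integrable \<mu> {0<..<1} (\<lambda>s. cNs DIM('n) s * kernel_integral \<Omega> (\<lambda>_. 1) x s)"
    using mu_kernel_integrable[of "\<lambda>_. 1" 1 x] assms by simp
  show "0 < cNs DIM('n) s * kernel_integral \<Omega> (\<lambda>_. 1) x s" if "s \<in> {0<..<1}" for s
    using that assms cNs_pos[OF DIM_ge_1] kernel_integral_one_pos by simp
qed

lemma mu_kernel_integral_one_ge:
  assumes x: "x \<notin> closure \<Omega>" and L: "\<And>s. s \<in> {0<..<1} \<Longrightarrow> L \<le> kernel_integral \<Omega> (\<lambda>_. 1) x s"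
  shows "L * (LINT s:{0<..<1}|\<mu>. cNs DIM('n) s) \<le> mu_kernel_integral \<Omega> \<mu> (\<lambda>_. 1) x"
proof -
  have "(LINT s:{0<..<1}|\<mu>. cNs DIM('n) s * L) \<le> mu_kernel_integral \<Omega> \<mu> (\<lambda>_. 1) x"
    unfolding mu_kernel_integral_def
  proof (rule set_integral_mono)
    show "set_integrable \<mu> {0<..<1} (\<lambda>s. cNs DIM('n) s * L)"
      using cNs_set_integrable by (rule set_integrable_mult_left)
    show "set_integrable \<mu> {0<..<1} (\<lambda>s. cNs DIM('n) s * kernel_integral \<Omega> (\<lambda>_. 1) x s)"
      using mu_kernel_integrable[of "\<lambda>_. 1" 1 x] x by simp
    show "cNs DIM('n) s * L \<le> cNs DIM('n) s * kernel_integral \<Omega> (\<lambda>_. 1) x s"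
      if "s \<in> {0<..<1}" for s
      using that L[OF that] cNs_pos[OF DIM_ge_1, of s] by (intro mult_left_mono) auto
  qed
  then show ?thesis by (simp add: mult.commute)
qed

text \<open>The dyadic ball with radius c t, t = r0/2^k, has measure (c t)^N |B(0,1)|, and the kernel is at
  least (3 t)^(-N) on it once |x - p| < t: each of these disjoint balls contributes (c/3)^N |B(0,1)|.\<close>
lemma kernel_integral_one_ge_dyadic:
  assumes x: "x \<notin> closure \<Omega>" and e: "norm e = 1" and c: "0 < c" "c \<le> 1/4"
    and r0: "0 < r0" "r0 \<le> 1/3"
    and balls: "\<And>t. 0 < t \<Longrightarrow> t \<le> r0 \<Longrightarrow> ball (p + t *\<^sub>R e) (c * t) \<subseteq> \<Omega>"
    and xp: "norm (x - p) < r0 / 2^n" and s: "0 \<le> s" "s \<le> 1"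
  shows "real (Suc n) * ((c/3) ^ DIM('n) * measure lborel (ball (0::'n) 1))
    \<le> kernel_integral \<Omega> (\<lambda>_. 1) x s"
proof -
  define a where "a k = 1 / (3 * (r0 / 2^k)) ^ DIM('n)" for k :: nat
  let ?B = "dyadic_ball p e c r0"
  have B: "?B k \<subseteq> \<Omega>" "emeasure lborel (?B k) < \<infinity>" for k
  proof -
    have "r0 / 2^k \<le> r0 / 1" using r0 by (intro divide_left_mono) auto
    then show "?B k \<subseteq> \<Omega>" unfolding dyadic_ball_def using r0 by (intro balls) auto
    show "emeasure lborel (?B k) < \<infinity>" unfolding dyadic_ball_def by (rule emeasure_lborel_ball_finite)
  qed
  have step_le: "(\<Sum>k\<le>n. a k * indicator (?B k) y) \<le> 1 / norm (x - y) powr (real DIM('n) + 2 * s)"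
    if y: "y \<in> \<Omega>" for y
  proof (cases "\<exists>j\<le>n. y \<in> ?B j")
    case True
    then obtain j where j: "j \<le> n" "y \<in> ?B j" by blast
    have tj: "0 < r0 / 2^j" "r0 / 2^j \<le> r0 / 1"
      using r0 by (simp, intro divide_left_mono) auto
    have t3: "3 * (r0 / 2^j) \<le> 1" using tj(2) r0(2) by linarith
    have "r0 / 2^n \<le> r0 / 2^j" using r0 j(1) by (intro divide_left_mono power_increasing) auto
    then have "norm (x - p) < r0 / 2^j" using xp by linarith
    moreover have "x \<noteq> y" using x y closure_subset by blast
    ultimately have "a j \<le> 1 / norm (x - y) powr (real DIM('n) + 2 * s)"
      unfolding a_def using c s j(2)
      by (intro inverse_powr_ge_on_ball[OF e tj(1) t3]) (auto simp: dyadic_ball_def)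
    moreover have "(\<Sum>k\<le>n. a k * indicator (?B k) y) = a j"
      using j disjoint_family_on_mono[OF subset_UNIV disjoint_family_dyadic_ball[OF e c(2) r0(1)]]
      by (intro sum_indicator_disjoint_family) auto
    ultimately show ?thesis by simp
  next
    case False
    then have "(\<Sum>k\<le>n. a k * indicator (?B k) y) = 0" by (intro sum.neutral) auto
    then show ?thesis by simp
  qed
  have "a k * measure lborel (?B k) = (c/3) ^ DIM('n) * measure lborel (ball (0::'n) 1)" for k
    using c r0 content_ball_conv_unit_ball[of "c * (r0 / 2^k)" "p + (r0 / 2^k) *\<^sub>R e"]
    by (simp add: a_def dyadic_ball_def power_mult_distrib power_divide field_simps)
  then have "real (Suc n) * ((c/3) ^ DIM('n) * measure lborel (ball (0::'n) 1))
      = (LINT y:\<Omega>|lborel. \<Sum>k\<le>n. a k * indicator (?B k) y)"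
    using B by (subst set_integral_sum_indicator(2)) (auto simp: dyadic_ball_def)
  also have "\<dots> \<le> kernel_integral \<Omega> (\<lambda>_. 1) x s"
  proof -
    obtain d where "d > 0" "\<And>y. y \<in> \<Omega> \<Longrightarrow> d \<le> norm (x - y)"
      using outside_closure_dist[OF x] by blast
    then show ?thesis
      unfolding kernel_integral_def using kernel_integrable[of "\<lambda>_. 1" 1 d x s] s step_le B
      by (intro set_integral_mono set_integral_sum_indicator(1)) (auto simp: dyadic_ball_def)
  qed
  finally show ?thesis .
qed

lemma mu_kernel_integral_one_tendsto_at_top:
  assumes e: "norm e = 1" and c: "0 < c" "c \<le> 1/4" and r0: "0 < r0" "r0 \<le> 1/3"
    and balls: "\<And>t. 0 < t \<Longrightarrow> t \<le> r0 \<Longrightarrow> ball (p + t *\<^sub>R e) (c * t) \<subseteq> \<Omega>"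
  shows "filterlim (mu_kernel_integral \<Omega> \<mu> (\<lambda>_. 1)) at_top (at p within - closure \<Omega>)"
  unfolding filterlim_at_top
proof
  fix K :: real
  define c1 where "c1 = (c/3) ^ DIM('n) * measure lborel (ball (0::'n) 1) * (LINT s:{0<..<1}|\<mu>. cNs DIM('n) s)"
  have "c1 > 0" using c cNs_integral_pos by (simp add: c1_def content_ball_pos)
  obtain n :: nat where "K / c1 < real n" using reals_Archimedean2 by blast
  then have "K < real n * c1" using \<open>c1 > 0\<close> by (simp add: field_simps)
  then have n: "K \<le> real (Suc n) * c1" using \<open>c1 > 0\<close> by (simp add: algebra_simps)
  have "K \<le> mu_kernel_integral \<Omega> \<mu> (\<lambda>_. 1) x"
    if "x \<in> - closure \<Omega>" "dist x p < r0 / 2^n" for x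
  proof -
    have "real (Suc n) * ((c/3) ^ DIM('n) * measure lborel (ball (0::'n) 1))
        * (LINT s:{0<..<1}|\<mu>. cNs DIM('n) s) \<le> mu_kernel_integral \<Omega> \<mu> (\<lambda>_. 1) x"
      using that kernel_integral_one_ge_dyadic[OF _ e c r0 balls]
      by (intro mu_kernel_integral_one_ge) (auto simp: dist_norm)
    then show ?thesis using n by (simp add: c1_def mult.assoc)
  qed
  then show "\<forall>\<^sub>F x in at p within - closure \<Omega>. K \<le> mu_kernel_integral \<Omega> \<mu> (\<lambda>_. 1) x"
    unfolding eventually_at using r0 by (intro exI[of _ "r0 / 2^n"]) auto
qed

lemma kernel_integral_deviation_le:
  assumes f: "continuous_on \<Omega> f" "\<And>y. y \<in> \<Omega> \<Longrightarrow> \<bar>f y\<bar> \<le> M"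
    and x: "x \<notin> closure \<Omega>" and s: "0 \<le> s" "s \<le> 1"
    and dev: "\<And>y. y \<in> \<Omega> \<Longrightarrow> \<bar>f y - a\<bar> / norm (x - y) powr (real DIM('n) + 2 * s)
        \<le> \<epsilon> / norm (x - y) powr (real DIM('n) + 2 * s) + C"
  shows "\<bar>kernel_integral \<Omega> f x s - a * kernel_integral \<Omega> (\<lambda>_. 1) x s\<bar>
    \<le> \<epsilon> * kernel_integral \<Omega> (\<lambda>_. 1) x s + C * measure lborel \<Omega>"
proof -
  obtain d where d: "d > 0" "\<And>y. y \<in> \<Omega> \<Longrightarrow> d \<le> norm (x - y)"
    using outside_closure_dist[OF x] by blast
  let ?K = "\<lambda>y. norm (x - y) powr (real DIM('n) + 2 * s)"
  have one: "set_integrable lborel \<Omega> (\<lambda>y. 1 / ?K y)"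
    using kernel_integrable[of "\<lambda>_. 1" 1 d x s] d s by simp
  then have eps: "set_integrable lborel \<Omega> (\<lambda>y. \<epsilon> * (1 / ?K y))" by (rule set_integrable_mult_right)
  have const: "set_integrable lborel \<Omega> (\<lambda>_. C)"
    by (rule set_integrable_const_real[OF \<Omega>_sets \<Omega>_finite])
  have "\<bar>(LINT y:\<Omega>|lborel. f y / ?K y) - a * (LINT y:\<Omega>|lborel. 1 / ?K y)\<bar>
      \<le> (LINT y:\<Omega>|lborel. \<epsilon> * (1 / ?K y) + C)"
  proof (rule set_integral_abs_diff_le)
    show "set_integrable lborel \<Omega> (\<lambda>y. f y / ?K y)" using kernel_integrable[OF f d s] .
    show "set_integrable lborel \<Omega> (\<lambda>y. \<epsilon> * (1 / ?K y) + C)"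
      using eps const by (rule set_integral_add)
    show "\<bar>f y / ?K y - a * (1 / ?K y)\<bar> \<le> \<epsilon> * (1 / ?K y) + C" if "y \<in> \<Omega>" for y
      using dev[OF that] by (simp add: diff_divide_distrib[symmetric] abs_divide)
  qed (fact one)
  also have "\<dots> = (LINT y:\<Omega>|lborel. \<epsilon> * (1 / ?K y)) + (LINT y:\<Omega>|lborel. C)"
    by (rule set_integral_add(2)[OF eps const])
  also have "\<dots> = \<epsilon> * kernel_integral \<Omega> (\<lambda>_. 1) x s + C * measure lborel \<Omega>"
    unfolding set_integral_mult_right kernel_integral_def
    using \<Omega>_sets \<Omega>_finite by (simp add: set_integral_const less_top mult.commute)
  finally show ?thesis unfolding kernel_integral_def by simp
qed

lemma mu_kernel_integral_deviation_le:
  assumes f: "continuous_on \<Omega> f" "\<And>y. y \<in> \<Omega> \<Longrightarrow> \<bar>f y\<bar> \<le> M" and x: "x \<notin> closure \<Omega>"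
    and dev: "\<And>s. s \<in> {0<..<1} \<Longrightarrow> \<bar>kernel_integral \<Omega> f x s - a * kernel_integral \<Omega> (\<lambda>_. 1) x s\<bar>
        \<le> \<epsilon> * kernel_integral \<Omega> (\<lambda>_. 1) x s + C"
  shows "\<bar>mu_kernel_integral \<Omega> \<mu> f x - a * mu_kernel_integral \<Omega> \<mu> (\<lambda>_. 1) x\<bar>
    \<le> \<epsilon> * mu_kernel_integral \<Omega> \<mu> (\<lambda>_. 1) x + C * (LINT s:{0<..<1}|\<mu>. cNs DIM('n) s)"
proof -
  let ?I = "\<lambda>s. cNs DIM('n) s * kernel_integral \<Omega> (\<lambda>_. 1) x s"
  have one: "set_integrable \<mu> {0<..<1} ?I"
    using mu_kernel_integrable[of "\<lambda>_. 1" 1 x] x by simp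
  have "\<bar>mu_kernel_integral \<Omega> \<mu> f x - a * mu_kernel_integral \<Omega> \<mu> (\<lambda>_. 1) x\<bar>
      \<le> (LINT s:{0<..<1}|\<mu>. \<epsilon> * ?I s + C * cNs DIM('n) s)"
    unfolding mu_kernel_integral_def
  proof (rule set_integral_abs_diff_le)
    show "set_integrable \<mu> {0<..<1} (\<lambda>s. cNs DIM('n) s * kernel_integral \<Omega> f x s)"
      using mu_kernel_integrable[OF f x] .
    show "set_integrable \<mu> {0<..<1} (\<lambda>s. \<epsilon> * ?I s + C * cNs DIM('n) s)"
      using one cNs_set_integrable by auto
    show "\<bar>cNs DIM('n) s * kernel_integral \<Omega> f x s - a * ?I s\<bar> \<le> \<epsilon> * ?I s + C * cNs DIM('n) s"
      if "s \<in> {0<..<1}" for s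
    proof -
      have pos: "cNs DIM('n) s > 0" using that cNs_pos[OF DIM_ge_1] by simp
      have "cNs DIM('n) s * kernel_integral \<Omega> f x s - a * ?I s
          = cNs DIM('n) s * (kernel_integral \<Omega> f x s - a * kernel_integral \<Omega> (\<lambda>_. 1) x s)"
        by (simp add: algebra_simps)
      then have "\<bar>cNs DIM('n) s * kernel_integral \<Omega> f x s - a * ?I s\<bar>
          = cNs DIM('n) s * \<bar>kernel_integral \<Omega> f x s - a * kernel_integral \<Omega> (\<lambda>_. 1) x s\<bar>"
        using pos by (simp add: abs_mult)
      also have "\<dots> \<le> cNs DIM('n) s * (\<epsilon> * kernel_integral \<Omega> (\<lambda>_. 1) x s + C)"
        using pos dev[OF that] by (intro mult_left_mono) auto
      finally show ?thesis by (simp add: algebra_simps)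
    qed
  qed (fact one)
  also have "\<dots> = \<epsilon> * mu_kernel_integral \<Omega> \<mu> (\<lambda>_. 1) x + C * (LINT s:{0<..<1}|\<mu>. cNs DIM('n) s)"
    unfolding mu_kernel_integral_def using one cNs_set_integrable by (simp add: set_integral_add)
  finally show ?thesis .
qed

end

locale extension_setting = kernel_setting +
  fixes v0 :: "'n::euclidean_space \<Rightarrow> real"
  assumes v0_cont: "continuous_on (closure \<Omega>) v0"
begin

lemma v0_cont_\<Omega>: "continuous_on \<Omega> v0"
  using v0_cont closure_subset by (rule continuous_on_subset)

lemma v0_bounded: obtains M where "\<And>y. y \<in> closure \<Omega> \<Longrightarrow> \<bar>v0 y\<bar> \<le> M"
proof -
  have "bounded (v0 ` closure \<Omega>)"
    using bounded_\<Omega> by (intro compact_imp_bounded compact_continuous_image v0_cont) (simp add: compact_closure)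
  then show ?thesis using that by (auto simp: bounded_iff)
qed

lemma nonlocal_neumann_ext_v:
  assumes x: "x \<notin> closure \<Omega>" and s: "0 \<le> s" "s \<le> 1"
  shows "nonlocal_neumann \<Omega> s (ext_v \<Omega> \<mu> v0) x
    = ext_v \<Omega> \<mu> v0 x * (cNs DIM('n) s * kernel_integral \<Omega> (\<lambda>_. 1) x s)
      - cNs DIM('n) s * kernel_integral \<Omega> v0 x s"
proof -
  obtain M where M: "\<And>y. y \<in> closure \<Omega> \<Longrightarrow> \<bar>v0 y\<bar> \<le> M" using v0_bounded by blast
  obtain d where d: "d > 0" "\<And>y. y \<in> \<Omega> \<Longrightarrow> d \<le> norm (x - y)"
    using outside_closure_dist[OF x] by blast
  let ?K = "\<lambda>y. norm (x - y) powr (real DIM('n) + 2 * s)"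
  let ?v = "ext_v \<Omega> \<mu> v0 x"
  have one: "set_integrable lborel \<Omega> (\<lambda>y. ?v * (1 / ?K y))"
    using kernel_integrable[of "\<lambda>_. 1" 1 d x s] d s by (intro set_integrable_mult_right) simp
  have v0: "set_integrable lborel \<Omega> (\<lambda>y. v0 y / ?K y)"
    using kernel_integrable[OF v0_cont_\<Omega> _ d s] M closure_subset by blast
  have "(LINT y:\<Omega>|lborel. (?v - ext_v \<Omega> \<mu> v0 y) / ?K y)
      = (LINT y:\<Omega>|lborel. ?v * (1 / ?K y) - v0 y / ?K y)"
    using closure_subset[of \<Omega>]
    by (intro set_lebesgue_integral_cong \<Omega>_sets) (auto simp: ext_v_def diff_divide_distrib)
  also have "\<dots> = ?v * kernel_integral \<Omega> (\<lambda>_. 1) x s - kernel_integral \<Omega> v0 x s"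
    unfolding set_integral_diff(2)[OF one v0] set_integral_mult_right kernel_integral_def ..
  finally have "(LINT y:\<Omega>|lborel. (?v - ext_v \<Omega> \<mu> v0 y) / ?K y)
      = ?v * kernel_integral \<Omega> (\<lambda>_. 1) x s - kernel_integral \<Omega> v0 x s" .
  then show ?thesis unfolding nonlocal_neumann_def by (simp add: right_diff_distrib mult.left_commute)
qed

lemma nonlocal_neumann_integral_ext_v:
  assumes x: "x \<notin> closure \<Omega>"
  shows "set_integrable \<mu> {0<..<1} (\<lambda>s. nonlocal_neumann \<Omega> s (ext_v \<Omega> \<mu> v0) x)"
    and "(LINT s:{0<..<1}|\<mu>. nonlocal_neumann \<Omega> s (ext_v \<Omega> \<mu> v0) x) = 0"
proof -
  obtain M where M: "\<And>y. y \<in> closure \<Omega> \<Longrightarrow> \<bar>v0 y\<bar> \<le> M" using v0_bounded by blast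
  let ?v = "ext_v \<Omega> \<mu> v0 x"
  let ?g = "\<lambda>s. ?v * (cNs DIM('n) s * kernel_integral \<Omega> (\<lambda>_. 1) x s)
      - cNs DIM('n) s * kernel_integral \<Omega> v0 x s"
  have one: "set_integrable \<mu> {0<..<1} (\<lambda>s. cNs DIM('n) s * kernel_integral \<Omega> (\<lambda>_. 1) x s)"
    using mu_kernel_integrable[of "\<lambda>_. 1" 1 x] x by simp
  have v0: "set_integrable \<mu> {0<..<1} (\<lambda>s. cNs DIM('n) s * kernel_integral \<Omega> v0 x s)"
    using mu_kernel_integrable[OF v0_cont_\<Omega> _ x] M closure_subset by blast
  have eq: "nonlocal_neumann \<Omega> s (ext_v \<Omega> \<mu> v0) x = ?g s" if "s \<in> {0<..<1}" for s
    using nonlocal_neumann_ext_v[OF x] that by simp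
  have g: "set_integrable \<mu> {0<..<1} ?g" using one v0 by auto
  then show "set_integrable \<mu> {0<..<1} (\<lambda>s. nonlocal_neumann \<Omega> s (ext_v \<Omega> \<mu> v0) x)"
    using eq by (subst set_integrable_cong[OF refl refl]) auto
  have "(LINT s:{0<..<1}|\<mu>. nonlocal_neumann \<Omega> s (ext_v \<Omega> \<mu> v0) x) = (LINT s:{0<..<1}|\<mu>. ?g s)"
    using eq by (intro set_lebesgue_integral_cong unit_interval_sets) auto
  also have "\<dots> = ?v * mu_kernel_integral \<Omega> \<mu> (\<lambda>_. 1) x - mu_kernel_integral \<Omega> \<mu> v0 x"
    using one v0 by (simp add: set_integral_diff mu_kernel_integral_def)
  also have "\<dots> = 0"
    using mu_kernel_integral_one_pos[OF x] by (simp add: ext_v_eq_mu_kernel_integral[OF x])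
  finally show "(LINT s:{0<..<1}|\<mu>. nonlocal_neumann \<Omega> s (ext_v \<Omega> \<mu> v0) x) = 0" .
qed

lemma isCont_ext_v_interior:
  assumes "x \<in> \<Omega>"
  shows "isCont (ext_v \<Omega> \<mu> v0) x"
proof -
  have "\<forall>\<^sub>F y in nhds x. ext_v \<Omega> \<mu> v0 y = v0 y"
    using eventually_nhds_in_open[OF open_\<Omega> assms]
    by (rule eventually_mono) (use closure_subset in \<open>auto simp: ext_v_def\<close>)
  moreover have "isCont v0 x"
    using v0_cont_\<Omega> open_\<Omega> assms continuous_on_eq_continuous_at by blast
  ultimately show ?thesis using isCont_cong by blast
qed

lemma isCont_ext_v_exterior:
  assumes "x \<notin> closure \<Omega>"
  shows "isCont (ext_v \<Omega> \<mu> v0) x"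
proof -
  obtain M where M: "\<And>y. y \<in> closure \<Omega> \<Longrightarrow> \<bar>v0 y\<bar> \<le> M" using v0_bounded by blast
  have ev: "\<forall>\<^sub>F y in nhds x.
      ext_v \<Omega> \<mu> v0 y = mu_kernel_integral \<Omega> \<mu> v0 y / mu_kernel_integral \<Omega> \<mu> (\<lambda>_. 1) y"
    using eventually_nhds_in_open[OF open_Compl[OF closed_closure], of x \<Omega>] assms
    by (auto elim!: eventually_mono simp: ext_v_eq_mu_kernel_integral)
  have "isCont (\<lambda>y. mu_kernel_integral \<Omega> \<mu> v0 y / mu_kernel_integral \<Omega> \<mu> (\<lambda>_. 1) y) x"
    using isCont_mu_kernel_integral[OF v0_cont_\<Omega> _ assms] M closure_subset
      isCont_mu_kernel_integral[of "\<lambda>_. 1" 1 x] assms mu_kernel_integral_one_pos[OF assms]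
    by (intro isCont_divide) auto
  then show ?thesis using isCont_cong[OF ev] by simp
qed

lemma ext_v_deviation_le:
  assumes x: "x \<notin> closure \<Omega>" and p: "p \<in> closure \<Omega>" and "0 < \<rho>" "0 \<le> \<epsilon>"
    and M: "\<And>y. y \<in> closure \<Omega> \<Longrightarrow> \<bar>v0 y\<bar> \<le> M"
    and near: "\<And>y. y \<in> closure \<Omega> \<Longrightarrow> dist y p < \<rho> \<Longrightarrow> \<bar>v0 y - v0 p\<bar> \<le> \<epsilon>"
    and xp: "dist x p < \<rho>/2"
  shows "\<bar>ext_v \<Omega> \<mu> v0 x - v0 p\<bar> \<le> \<epsilon> + 2 * M * max 1 ((2/\<rho>) powr (real DIM('n) + 2))
    * measure lborel \<Omega> * (LINT s:{0<..<1}|\<mu>. cNs DIM('n) s) / mu_kernel_integral \<Omega> \<mu> (\<lambda>_. 1) x"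
    (is "_ \<le> \<epsilon> + ?C / ?D")
proof -
  have "\<bar>kernel_integral \<Omega> v0 x s - v0 p * kernel_integral \<Omega> (\<lambda>_. 1) x s\<bar>
      \<le> \<epsilon> * kernel_integral \<Omega> (\<lambda>_. 1) x s
        + 2 * M * max 1 ((2/\<rho>) powr (real DIM('n) + 2)) * measure lborel \<Omega>"
    if "s \<in> {0<..<1}" for s
  proof (rule kernel_integral_deviation_le[OF v0_cont_\<Omega> _ x])
    show "\<bar>v0 y - v0 p\<bar> / norm (x - y) powr (real DIM('n) + 2 * s)
        \<le> \<epsilon> / norm (x - y) powr (real DIM('n) + 2 * s) + 2 * M * max 1 ((2/\<rho>) powr (real DIM('n) + 2))"
      if "y \<in> \<Omega>" for y
    proof (rule deviation_over_kernel_le)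
      show "\<bar>v0 y - v0 p\<bar> \<le> 2 * M" using M[of y] M[OF p] \<open>y \<in> \<Omega>\<close> closure_subset by force
      show "x \<noteq> y" using x \<open>y \<in> \<Omega>\<close> closure_subset by blast
    qed (use that \<open>s \<in> {0<..<1}\<close> assms closure_subset in \<open>auto simp: dist_norm\<close>)
  qed (use M closure_subset that in auto)
  then have "\<bar>mu_kernel_integral \<Omega> \<mu> v0 x - v0 p * ?D\<bar> \<le> \<epsilon> * ?D + ?C"
    using mu_kernel_integral_deviation_le[OF v0_cont_\<Omega> _ x] M closure_subset by blast
  moreover have D: "?D > 0" using mu_kernel_integral_one_pos[OF x] .
  moreover have "mu_kernel_integral \<Omega> \<mu> v0 x / ?D - v0 p = (mu_kernel_integral \<Omega> \<mu> v0 x - v0 p * ?D) / ?D"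
    using D by (simp add: field_simps)
  ultimately have "\<bar>mu_kernel_integral \<Omega> \<mu> v0 x / ?D - v0 p\<bar> \<le> (\<epsilon> * ?D + ?C) / ?D"
    using D by (simp add: abs_divide divide_right_mono)
  also have "\<dots> = \<epsilon> + ?C / ?D" using D by (simp add: field_simps)
  finally show ?thesis by (simp add: ext_v_eq_mu_kernel_integral[OF x])
qed

lemma tendsto_ext_v_exterior:
  assumes p: "p \<in> closure \<Omega>"
    and D: "filterlim (mu_kernel_integral \<Omega> \<mu> (\<lambda>_. 1)) at_top (at p within - closure \<Omega>)"
  shows "(ext_v \<Omega> \<mu> v0 \<longlongrightarrow> v0 p) (at p within - closure \<Omega>)"
proof (rule tendstoI)
  fix \<epsilon> :: real assume "\<epsilon> > 0"
  obtain M where M: "\<And>y. y \<in> closure \<Omega> \<Longrightarrow> \<bar>v0 y\<bar> \<le> M" using v0_bounded by blast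
  obtain \<rho> where \<rho>: "\<rho> > 0" "\<And>y. y \<in> closure \<Omega> \<Longrightarrow> dist y p < \<rho> \<Longrightarrow> dist (v0 y) (v0 p) < \<epsilon>/2"
    using v0_cont p \<open>\<epsilon> > 0\<close> unfolding continuous_on_iff by (meson half_gt_zero)
  define C where "C = 2 * M * max 1 ((2/\<rho>) powr (real DIM('n) + 2))
    * measure lborel \<Omega> * (LINT s:{0<..<1}|\<mu>. cNs DIM('n) s)"
  have "((\<lambda>x. C / mu_kernel_integral \<Omega> \<mu> (\<lambda>_. 1) x) \<longlongrightarrow> 0) (at p within - closure \<Omega>)"
    by (rule tendsto_divide_0[OF tendsto_const filterlim_at_top_imp_at_infinity[OF D]])
  then have "\<forall>\<^sub>F x in at p within - closure \<Omega>. C / mu_kernel_integral \<Omega> \<mu> (\<lambda>_. 1) x < \<epsilon>/2"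
    using \<open>\<epsilon> > 0\<close> by (intro order_tendstoD(2)) auto
  moreover have "\<forall>\<^sub>F x in at p within - closure \<Omega>. x \<notin> closure \<Omega> \<and> dist x p < \<rho>/2"
    unfolding eventually_at using \<rho> by (intro exI[of _ "\<rho>/2"]) auto
  ultimately show "\<forall>\<^sub>F x in at p within - closure \<Omega>. dist (ext_v \<Omega> \<mu> v0 x) (v0 p) < \<epsilon>"
  proof eventually_elim
    case (elim x)
    have "\<bar>ext_v \<Omega> \<mu> v0 x - v0 p\<bar> \<le> \<epsilon>/2 + C / mu_kernel_integral \<Omega> \<mu> (\<lambda>_. 1) x"
      unfolding C_def using \<rho> \<open>\<epsilon> > 0\<close> elim(2) p M
      by (intro ext_v_deviation_le) (auto simp: dist_real_def less_imp_le)
    then show ?case unfolding dist_real_def using elim(1) by linarith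
  qed
qed

lemma isCont_ext_v_boundary:
  assumes p: "p \<in> closure \<Omega>"
    and D: "filterlim (mu_kernel_integral \<Omega> \<mu> (\<lambda>_. 1)) at_top (at p within - closure \<Omega>)"
  shows "isCont (ext_v \<Omega> \<mu> v0) p"
proof -
  have "(v0 \<longlongrightarrow> v0 p) (at p within closure \<Omega>)"
    using v0_cont p by (simp add: continuous_on_def)
  then have "(ext_v \<Omega> \<mu> v0 \<longlongrightarrow> v0 p) (at p within closure \<Omega>)"
    by (rule Lim_transform_within[OF _ zero_less_one]) (simp add: ext_v_def)
  then have "(ext_v \<Omega> \<mu> v0 \<longlongrightarrow> v0 p) (at p within closure \<Omega> \<union> - closure \<Omega>)"
    using tendsto_ext_v_exterior[OF p D] unfolding Lim_within_Un by blast
  then show ?thesis using p by (simp add: isCont_def ext_v_def)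
qed

lemma continuous_ext_v:
  assumes "C1_boundary \<Omega>"
  shows "continuous_on UNIV (ext_v \<Omega> \<mu> v0)"
proof (intro continuous_at_imp_continuous_on ballI)
  fix p :: 'n
  consider "p \<in> \<Omega>" | "p \<notin> closure \<Omega>" | "p \<in> frontier \<Omega>"
    using open_\<Omega> by (auto simp: frontier_def interior_open)
  then show "isCont (ext_v \<Omega> \<mu> v0) p"
  proof cases
    case 3
    then obtain r e g Dg where graph: "r > 0" "norm e = 1" "\<forall>x. g x = g (x - (x \<bullet> e) *\<^sub>R e)"
      "\<forall>x. (g has_derivative blinfun_apply (Dg x)) (at x)" "continuous_on UNIV Dg"
      "\<Omega> \<inter> ball p r = {y \<in> ball p r. y \<bullet> e > g y}"
      using assms unfolding C1_boundary_def by blast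
    obtain c r0 where "0 < c" "c \<le> 1/4" "0 < r0" "r0 \<le> 1/3"
      "\<And>t. 0 < t \<Longrightarrow> t \<le> r0 \<Longrightarrow> ball (p + t *\<^sub>R e) (c * t) \<subseteq> \<Omega>"
      using graph_boundary_interior_balls[OF open_\<Omega> 3 graph] by blast
    then have "filterlim (mu_kernel_integral \<Omega> \<mu> (\<lambda>_. 1)) at_top (at p within - closure \<Omega>)"
      by (intro mu_kernel_integral_one_tendsto_at_top[OF graph(2)])
    moreover have "p \<in> closure \<Omega>" using 3 by (simp add: frontier_def)
    ultimately show ?thesis by (intro isCont_ext_v_boundary)
  qed (simp_all add: isCont_ext_v_interior isCont_ext_v_exterior)
qed

end

theorem corollary7p1:
  fixes \<Omega> :: "'n::euclidean_space set" and v0 :: "'n \<Rightarrow> real" and \<mu> :: "real measure"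
  assumes "sets \<mu> = sets borel"
    and "finite_measure \<mu>"
    and "emeasure \<mu> (UNIV - {0<..<1}) = 0"
    and "emeasure \<mu> {0<..<1} > 0"
    and "bounded_domain \<Omega>"
    and "C1_boundary \<Omega>"
    and "continuous_on (closure \<Omega>) v0"
  shows "continuous_on UNIV (ext_v \<Omega> \<mu> v0)
       \<and> (\<forall>x\<in>closure \<Omega>. ext_v \<Omega> \<mu> v0 x = v0 x)
       \<and> (\<forall>x. x \<notin> closure \<Omega> \<longrightarrow>
             set_integrable \<mu> {0<..<1} (\<lambda>s. nonlocal_neumann \<Omega> s (ext_v \<Omega> \<mu> v0) x)
           \<and> (LINT s:{0<..<1}|\<mu>. nonlocal_neumann \<Omega> s (ext_v \<Omega> \<mu> v0) x) = 0)"
proof -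
  have "open \<Omega>" "bounded \<Omega>" "\<Omega> \<noteq> {}" using assms(5) by (auto simp: bounded_domain_def)
  then interpret extension_setting \<Omega> \<mu> v0
    using assms(1,2,4,7) by (intro extension_setting.intro kernel_setting.intro extension_setting_axioms.intro)
  have "\<forall>x\<in>closure \<Omega>. ext_v \<Omega> \<mu> v0 x = v0 x" by (simp add: ext_v_def)
  then show ?thesis using continuous_ext_v[OF assms(6)] nonlocal_neumann_integral_ext_v by blast
qed

end
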